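(* Let $(G,\cdot)$ and $(H,\circ)$ be loops isotopic under the triple $(A,B,C)$, and suppose the pair satisfies the $\mathcal{T}$ condition with respect to $(A,B,C)$. Then $(G,\cdot)$ is a WIPL if and only if $(H,\circ)$ is a WIPL.
   Context: Maps are written on the right of their arguments ($xU$) and composed left to right: $UV$ means first apply $U$, then $V$. For a loop $(L,\cdot)$ with identity $e$, $x^\rho$ and $x^\lambda$ denote the right and left inverses of $x$ ($x x^\rho=e=x^\lambda x$), and $J_\rho:x\mapsto x^\rho$, $J_\lambda:x\mapsto x^\lambda$, $L_x:y\mapsto xy$, $R_x:y\mapsto yx$ (so $J_\lambda=J_\rho^{-1}$). $L$ is a weak inverse property loop (WIPL) if $xy\cdot z=e$ implies $x\cdot yz=e$ for all $x,y,z\in L$. A triple $(U,V,W)$ of bijections $G\to H$ between loops $(G,\cdot)$ and $(H,\circ)$ is an isotopism if $xU\circ yV=(x\cdot y)W$ for all $x,y\in G$. For the loop $(H,\circ)$ (identity $e'$) the corresponding maps are denoted $J_\rho'$ ($y\mapsto y^{\rho'}$), $J_\lambda'$ ($y\mapsto y^{\lambda'}$), $L_y'$, $R_y'$. The $\mathcal{T}$ condition: if $(G,\cdot)$ and $(H,\circ)$ are loops isotopic under $(A,B,C)$, the pair satisfies the $\mathcal{T}$ condition if $A=B$ and either $J_\rho'=C^{-1}J_\rho B=A^{-1}J_\rho C$ or $J_\lambda'=C^{-1}J_\lambda A=B^{-1}J_\lambda C$. *)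

theory Defs
  imports Main
begin

definition loop :: "'a set \<Rightarrow> ('a \<Rightarrow> 'a \<Rightarrow> 'a) \<Rightarrow> 'a \<Rightarrow> bool" where
  "loop L m e \<longleftrightarrow>
     e \<in> L \<and>
     (\<forall>x\<in>L. \<forall>y\<in>L. m x y \<in> L) \<and>
     (\<forall>x\<in>L. m e x = x \<and> m x e = x) \<and>
     (\<forall>a\<in>L. \<forall>b\<in>L. \<exists>!x. x \<in> L \<and> m a x = b) \<and>
     (\<forall>a\<in>L. \<forall>b\<in>L. \<exists>!y. y \<in> L \<and> m y a = b)"

definition rinv :: "'a set \<Rightarrow> ('a \<Rightarrow> 'a \<Rightarrow> 'a) \<Rightarrow> 'a \<Rightarrow> 'a \<Rightarrow> 'a" where
  "rinv L m e x = (THE y. y \<in> L \<and> m x y = e)"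

definition linv :: "'a set \<Rightarrow> ('a \<Rightarrow> 'a \<Rightarrow> 'a) \<Rightarrow> 'a \<Rightarrow> 'a \<Rightarrow> 'a" where
  "linv L m e x = (THE y. y \<in> L \<and> m y x = e)"

definition WIPL :: "'a set \<Rightarrow> ('a \<Rightarrow> 'a \<Rightarrow> 'a) \<Rightarrow> 'a \<Rightarrow> bool" where
  "WIPL L m e \<longleftrightarrow> loop L m e \<and>
     (\<forall>x\<in>L. \<forall>y\<in>L. \<forall>z\<in>L. m (m x y) z = e \<longrightarrow> m x (m y z) = e)"

definition isotopism ::
  "'a set \<Rightarrow> ('a \<Rightarrow> 'a \<Rightarrow> 'a) \<Rightarrow> 'b set \<Rightarrow> ('b \<Rightarrow> 'b \<Rightarrow> 'b) \<Rightarrow>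
   ('a \<Rightarrow> 'b) \<Rightarrow> ('a \<Rightarrow> 'b) \<Rightarrow> ('a \<Rightarrow> 'b) \<Rightarrow> bool" where
  "isotopism G m H n U V W \<longleftrightarrow>
     bij_betw U G H \<and> bij_betw V G H \<and> bij_betw W G H \<and>
     (\<forall>x\<in>G. \<forall>y\<in>G. n (U x) (V y) = W (m x y))"

text \<open>The T condition. Maps act on the right and compose left to right, so
  C^{-1} J_rho B is the map y \<mapsto> B (J_rho (C^{-1} y)).\<close>

definition T_condition ::
  "'a set \<Rightarrow> ('a \<Rightarrow> 'a \<Rightarrow> 'a) \<Rightarrow> 'a \<Rightarrow> 'b set \<Rightarrow> ('b \<Rightarrow> 'b \<Rightarrow> 'b) \<Rightarrow> 'b \<Rightarrow>
   ('a \<Rightarrow> 'b) \<Rightarrow> ('a \<Rightarrow> 'b) \<Rightarrow> ('a \<Rightarrow> 'b) \<Rightarrow> bool" where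
  "T_condition G m e H n e' A B C \<longleftrightarrow>
     (\<forall>x\<in>G. A x = B x) \<and>
     ((\<forall>y\<in>H. rinv H n e' y = B (rinv G m e (inv_into G C y)) \<and>
              rinv H n e' y = C (rinv G m e (inv_into G A y)))
      \<or>
      (\<forall>y\<in>H. linv H n e' y = A (linv G m e (inv_into G C y)) \<and>
              linv H n e' y = C (linv G m e (inv_into G B y))))"

end

theory Submission
  imports Defs
begin

(* In a loop the third argument of the WIPL implication is
   determined by the other two, so the weak inverse property is an identity:
   with right inverses it reads  y (xy)^rho = x^rho,  with left inverses
   (yz)^lambda y = z^lambda  (lemmas WIPL_iff_rinv_identity and
   WIPL_iff_linv_identity).  Under an isotopism (A,A,C) satisfying the
   right-inverse half of the T condition, both sides of the H-identity at
   (xA, yA) are C-images of the two sides of the G-identity at (x,y); C being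
   injective and A surjective, the identities hold simultaneously in G and H
   (isotopism_rinv_identity_iff, WIPL_transfer_rinv). *)

lemma loop_closed: "loop L m e \<Longrightarrow> x \<in> L \<Longrightarrow> y \<in> L \<Longrightarrow> m x y \<in> L"
  unfolding loop_def by simp

lemma loop_unit_in: "loop L m e \<Longrightarrow> e \<in> L"
  unfolding loop_def by simp

lemma loop_right_div: "loop L m e \<Longrightarrow> a \<in> L \<Longrightarrow> b \<in> L \<Longrightarrow> \<exists>!x. x \<in> L \<and> m a x = b"
  unfolding loop_def by simp

lemma loop_left_div: "loop L m e \<Longrightarrow> a \<in> L \<Longrightarrow> b \<in> L \<Longrightarrow> \<exists>!y. y \<in> L \<and> m y a = b"
  unfolding loop_def by simp

lemma loop_right_cancel:
  assumes "loop L m e" "a \<in> L" "x \<in> L" "y \<in> L" "m x a = m y a"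
  shows "x = y"
  using loop_left_div[OF assms(1,2) loop_closed[OF assms(1,4,2)]] assms(3-5)
  by (metis (no_types, lifting))

lemma rinv_closed_right:
  assumes "loop L m e" "x \<in> L"
  shows "rinv L m e x \<in> L" "m x (rinv L m e x) = e"
  using theI'[OF loop_right_div[OF assms loop_unit_in[OF assms(1)]]]
  unfolding rinv_def by simp_all

lemma rinv_unique:
  assumes "loop L m e" "x \<in> L" "y \<in> L" "m x y = e"
  shows "rinv L m e x = y"
  unfolding rinv_def
  by (rule the1_equality[OF loop_right_div[OF assms(1,2) loop_unit_in[OF assms(1)]] conjI[OF assms(3,4)]])

lemma linv_closed_left:
  assumes "loop L m e" "x \<in> L"
  shows "linv L m e x \<in> L" "m (linv L m e x) x = e"
  using theI'[OF loop_left_div[OF assms loop_unit_in[OF assms(1)]]]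
  unfolding linv_def by simp_all

lemma linv_unique:
  assumes "loop L m e" "x \<in> L" "y \<in> L" "m y x = e"
  shows "linv L m e x = y"
  unfolding linv_def
  by (rule the1_equality[OF loop_left_div[OF assms(1,2) loop_unit_in[OF assms(1)]] conjI[OF assms(3,4)]])

lemma WIPL_D:
  "WIPL L m e \<Longrightarrow> x \<in> L \<Longrightarrow> y \<in> L \<Longrightarrow> z \<in> L \<Longrightarrow> m (m x y) z = e \<Longrightarrow> m x (m y z) = e"
  unfolding WIPL_def by simp

text \<open>Since  xy\<cdot>z = e  forces  z = (xy)^rho, a loop is a WIPL iff  y (xy)^rho = x^rho.\<close>
lemma WIPL_iff_rinv_identity:
  assumes L: "loop L m e"
  shows "WIPL L m e \<longleftrightarrow>
           (\<forall>x\<in>L. \<forall>y\<in>L. m y (rinv L m e (m x y)) = rinv L m e x)"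
proof
  assume wipl: "WIPL L m e"
  show "\<forall>x\<in>L. \<forall>y\<in>L. m y (rinv L m e (m x y)) = rinv L m e x"
  proof (intro ballI)
    fix x y assume x: "x \<in> L" and y: "y \<in> L"
    let ?z = "rinv L m e (m x y)"
    have xy: "m x y \<in> L" using loop_closed[OF L x y] .
    have "m x (m y ?z) = e"
      using WIPL_D[OF wipl x y rinv_closed_right[OF L xy]] .
    then show "m y ?z = rinv L m e x"
      using rinv_unique[OF L x loop_closed[OF L y rinv_closed_right(1)[OF L xy]]] by simp
  qed
next
  assume identity: "\<forall>x\<in>L. \<forall>y\<in>L. m y (rinv L m e (m x y)) = rinv L m e x"
  show "WIPL L m e"
    unfolding WIPL_def
  proof (intro conjI L ballI impI)
    fix x y z assume x: "x \<in> L" and y: "y \<in> L" and z: "z \<in> L" and "m (m x y) z = e"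
    then have "z = rinv L m e (m x y)"
      using rinv_unique[OF L loop_closed[OF L x y] z] by simp
    then have "m y z = rinv L m e x" using identity x y by simp
    then show "m x (m y z) = e" using rinv_closed_right(2)[OF L x] by simp
  qed
qed

text \<open>Dually, since  xy\<cdot>z = e  means  xy = z^lambda, a loop is a WIPL iff
  (yz)^lambda y = z^lambda.\<close>
lemma WIPL_iff_linv_identity:
  assumes L: "loop L m e"
  shows "WIPL L m e \<longleftrightarrow>
           (\<forall>y\<in>L. \<forall>z\<in>L. m (linv L m e (m y z)) y = linv L m e z)"
proof
  assume wipl: "WIPL L m e"
  show "\<forall>y\<in>L. \<forall>z\<in>L. m (linv L m e (m y z)) y = linv L m e z"
  proof (intro ballI)
    fix y z assume y: "y \<in> L" and z: "z \<in> L"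
    obtain x where x: "x \<in> L" and xy: "m x y = linv L m e z"
      using ex1_implies_ex[OF loop_left_div[OF L y linv_closed_left(1)[OF L z]]] by blast
    have "m (m x y) z = e" using xy linv_closed_left(2)[OF L z] by simp
    then have "m x (m y z) = e" using WIPL_D[OF wipl x y z] by simp
    then have "linv L m e (m y z) = x"
      using linv_unique[OF L loop_closed[OF L y z] x] by simp
    then show "m (linv L m e (m y z)) y = linv L m e z" using xy by simp
  qed
next
  assume identity: "\<forall>y\<in>L. \<forall>z\<in>L. m (linv L m e (m y z)) y = linv L m e z"
  show "WIPL L m e"
    unfolding WIPL_def
  proof (intro conjI L ballI impI)
    fix x y z assume x: "x \<in> L" and y: "y \<in> L" and z: "z \<in> L" and "m (m x y) z = e"
    then have "linv L m e z = m x y"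
      using linv_unique[OF L z loop_closed[OF L x y]] by simp
    then have "m x y = m (linv L m e (m y z)) y" using identity y z by simp
    then have "x = linv L m e (m y z)"
      using loop_right_cancel[OF L y x linv_closed_left(1)[OF L loop_closed[OF L y z]]] by simp
    then show "m x (m y z) = e" using linv_closed_left(2)[OF L loop_closed[OF L y z]] by simp
  qed
qed

lemma bij_betw_ball_iff:
  assumes "bij_betw f A B"
  shows "(\<forall>b\<in>B. P b) \<longleftrightarrow> (\<forall>a\<in>A. P (f a))"
  using bij_betw_imp_surj_on[OF assms] by auto

lemma bij_betw_inv_into_pointwise:
  assumes "bij_betw C G H" "\<forall>y\<in>H. f y = g (inv_into G C y)" "x \<in> G"
  shows "f (C x) = g x"
  using assms bij_betw_inv_into_left[OF assms(1,3)] bij_betw_apply[OF assms(1,3)] by metis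

text \<open>Under an isotopism (A,A,C) with  (xC)^rho' = x^rho A  and  (xA)^rho' = x^rho C,
  the right-inverse identity holds at (xA, yA) in H iff it holds at (x,y) in G:
  both sides of the former are the C-images of the sides of the latter.\<close>
lemma isotopism_rinv_identity_iff:
  assumes LG: "loop G m e"
    and iso: "isotopism G m H n A B C" and AB: "\<And>x. x \<in> G \<Longrightarrow> A x = B x"
    and rinv_C: "\<And>x. x \<in> G \<Longrightarrow> rinv H n e' (C x) = B (rinv G m e x)"
    and rinv_A: "\<And>x. x \<in> G \<Longrightarrow> rinv H n e' (A x) = C (rinv G m e x)"
    and x: "x \<in> G" and y: "y \<in> G"
  shows "n (A y) (rinv H n e' (n (A x) (A y))) = rinv H n e' (A x) \<longleftrightarrow>
         m y (rinv G m e (m x y)) = rinv G m e x"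
proof -
  have hom: "\<And>u v. u \<in> G \<Longrightarrow> v \<in> G \<Longrightarrow> n (A u) (B v) = C (m u v)"
    and inj_C: "inj_on C G"
    using iso unfolding isotopism_def bij_betw_def by auto
  have xy: "m x y \<in> G" using loop_closed[OF LG x y] .
  have "n (A y) (rinv H n e' (n (A x) (A y))) = n (A y) (rinv H n e' (C (m x y)))"
    using hom[OF x y] AB[OF y] by simp
  also have "\<dots> = C (m y (rinv G m e (m x y)))"
    using rinv_C[OF xy] hom[OF y rinv_closed_right(1)[OF LG xy]] by simp
  finally have lhs: "n (A y) (rinv H n e' (n (A x) (A y))) = C (m y (rinv G m e (m x y)))" .
  show ?thesis
    unfolding lhs rinv_A[OF x]
    using inj_on_eq_iff[OF inj_C loop_closed[OF LG y rinv_closed_right(1)[OF LG xy]]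
                                 rinv_closed_right(1)[OF LG x]] .
qed

lemma isotopism_linv_identity_iff:
  assumes LG: "loop G m e"
    and iso: "isotopism G m H n A B C" and AB: "\<And>x. x \<in> G \<Longrightarrow> A x = B x"
    and linv_C: "\<And>x. x \<in> G \<Longrightarrow> linv H n e' (C x) = A (linv G m e x)"
    and linv_B: "\<And>x. x \<in> G \<Longrightarrow> linv H n e' (B x) = C (linv G m e x)"
    and y: "y \<in> G" and z: "z \<in> G"
  shows "n (linv H n e' (n (A y) (A z))) (A y) = linv H n e' (A z) \<longleftrightarrow>
         m (linv G m e (m y z)) y = linv G m e z"
proof -
  have hom: "\<And>u v. u \<in> G \<Longrightarrow> v \<in> G \<Longrightarrow> n (A u) (B v) = C (m u v)"
    and inj_C: "inj_on C G"
    using iso unfolding isotopism_def bij_betw_def by auto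
  have yz: "m y z \<in> G" using loop_closed[OF LG y z] .
  have "n (linv H n e' (n (A y) (A z))) (A y) = n (linv H n e' (C (m y z))) (B y)"
    using hom[OF y z] AB[OF y] AB[OF z] by simp
  also have "\<dots> = C (m (linv G m e (m y z)) y)"
    using linv_C[OF yz] hom[OF linv_closed_left(1)[OF LG yz] y] by simp
  finally have lhs: "n (linv H n e' (n (A y) (A z))) (A y) = C (m (linv G m e (m y z)) y)" .
  show ?thesis
    unfolding lhs unfolding AB[OF z] linv_B[OF z]
    using inj_on_eq_iff[OF inj_C loop_closed[OF LG linv_closed_left(1)[OF LG yz] y]
                                 linv_closed_left(1)[OF LG z]] .
qed

lemma WIPL_transfer_rinv:
  assumes LG: "loop G m e" and LH: "loop H n e'"
    and iso: "isotopism G m H n A B C" and AB: "\<And>x. x \<in> G \<Longrightarrow> A x = B x"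
    and rinv_C: "\<And>x. x \<in> G \<Longrightarrow> rinv H n e' (C x) = B (rinv G m e x)"
    and rinv_A: "\<And>x. x \<in> G \<Longrightarrow> rinv H n e' (A x) = C (rinv G m e x)"
  shows "WIPL G m e \<longleftrightarrow> WIPL H n e'"
proof -
  have bij_A: "bij_betw A G H" using iso unfolding isotopism_def by simp
  show ?thesis
    unfolding WIPL_iff_rinv_identity[OF LG] WIPL_iff_rinv_identity[OF LH]
              bij_betw_ball_iff[OF bij_A]
    using isotopism_rinv_identity_iff[OF LG iso AB rinv_C rinv_A] by simp
qed

lemma WIPL_transfer_linv:
  assumes LG: "loop G m e" and LH: "loop H n e'"
    and iso: "isotopism G m H n A B C" and AB: "\<And>x. x \<in> G \<Longrightarrow> A x = B x"
    and linv_C: "\<And>x. x \<in> G \<Longrightarrow> linv H n e' (C x) = A (linv G m e x)"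
    and linv_B: "\<And>x. x \<in> G \<Longrightarrow> linv H n e' (B x) = C (linv G m e x)"
  shows "WIPL G m e \<longleftrightarrow> WIPL H n e'"
proof -
  have bij_A: "bij_betw A G H" using iso unfolding isotopism_def by simp
  show ?thesis
    unfolding WIPL_iff_linv_identity[OF LG] WIPL_iff_linv_identity[OF LH]
              bij_betw_ball_iff[OF bij_A]
    using isotopism_linv_identity_iff[OF LG iso AB linv_C linv_B] by simp
qed

theorem mainTheorem6:
  fixes G :: "'a set" and m :: "'a \<Rightarrow> 'a \<Rightarrow> 'a" and e :: 'a
    and H :: "'b set" and n :: "'b \<Rightarrow> 'b \<Rightarrow> 'b" and e' :: 'b
    and A B C :: "'a \<Rightarrow> 'b"
  assumes "loop G m e" and "loop H n e'"
    and "isotopism G m H n A B C"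
    and "T_condition G m e H n e' A B C"
  shows "WIPL G m e \<longleftrightarrow> WIPL H n e'"
proof -
  have bij_A: "bij_betw A G H" and bij_B: "bij_betw B G H" and bij_C: "bij_betw C G H"
    using assms(3) unfolding isotopism_def by simp_all
  have AB: "\<And>x. x \<in> G \<Longrightarrow> A x = B x" using assms(4) unfolding T_condition_def by simp
  from assms(4) consider
      (right) "\<forall>y\<in>H. rinv H n e' y = B (rinv G m e (inv_into G C y))"
              "\<forall>y\<in>H. rinv H n e' y = C (rinv G m e (inv_into G A y))"
    | (left) "\<forall>y\<in>H. linv H n e' y = A (linv G m e (inv_into G C y))"
             "\<forall>y\<in>H. linv H n e' y = C (linv G m e (inv_into G B y))"
    unfolding T_condition_def by blast
  then show ?thesis
  proof cases
    case right
    show ?thesis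
      using WIPL_transfer_rinv[OF assms(1-3) AB
              bij_betw_inv_into_pointwise[OF bij_C right(1)]
              bij_betw_inv_into_pointwise[OF bij_A right(2)]] .
  next
    case left
    show ?thesis
      using WIPL_transfer_linv[OF assms(1-3) AB
              bij_betw_inv_into_pointwise[OF bij_C left(1)]
              bij_betw_inv_into_pointwise[OF bij_B left(2)]] .
  qed
qed

end
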